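(* For every $n\geq 4$, the clique number of $\mathrm{KG}(\mathcal{T}_n)$ equals $\lfloor n/2\rfloor$. In particular $\chi(\mathrm{KG}(\mathcal{T}_n))\ge\lfloor n/2\rfloor$.
   Context: Label the vertices of a convex $n$-gon by $1,\dots,n$ in cyclic order; $\mathrm{Diag}_n = \{\{i,j\} \subseteq [n]: i-j\not\equiv \pm1 \pmod n\}$; a triangulation is identified with its set of $n-3$ diagonals, and $\mathcal{T}_n$ is the set of triangulations. $\mathrm{KG}(\mathcal{T}_n)$ is the graph on $\mathcal{T}_n$ in which two triangulations are adjacent iff they share no diagonal. *)

theory Defs
  imports "HOL-Number_Theory.Number_Theory"
begin

definition Diag :: "nat \<Rightarrow> nat set set" where
  "Diag n = {{i, j} | i j. i \<in> {1..n} \<and> j \<in> {1..n} \<and> i \<noteq> j \<and>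
      \<not> [int i - int j = 1] (mod int n) \<and> \<not> [int i - int j = -1] (mod int n)}"

definition crosses :: "nat set \<Rightarrow> nat set \<Rightarrow> bool" where
  "crosses d e \<longleftrightarrow> (\<exists>a b c f. ((d = {a, b} \<and> e = {c, f}) \<or> (d = {c, f} \<and> e = {a, b}))
      \<and> a < c \<and> c < b \<and> b < f)"

definition is_triangulation :: "nat \<Rightarrow> nat set set \<Rightarrow> bool" where
  "is_triangulation n T \<longleftrightarrow> T \<subseteq> Diag n \<and>
     (\<forall>d\<in>T. \<forall>e\<in>T. \<not> crosses d e) \<and>
     (\<forall>d\<in>Diag n - T. \<exists>e\<in>T. crosses d e)"

definition Triangs :: "nat \<Rightarrow> nat set set set" where
  "Triangs n = {T. is_triangulation n T}"

definition KG_adj :: "nat set set \<Rightarrow> nat set set \<Rightarrow> bool" where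
  "KG_adj T T' \<longleftrightarrow> T \<inter> T' = {}"

definition is_KG_clique :: "nat \<Rightarrow> nat set set set \<Rightarrow> bool" where
  "is_KG_clique n C \<longleftrightarrow> C \<subseteq> Triangs n \<and>
     (\<forall>T\<in>C. \<forall>T'\<in>C. T \<noteq> T' \<longrightarrow> KG_adj T T')"

definition KG_clique_number :: "nat \<Rightarrow> nat" where
  "KG_clique_number n = Max {card C | C. is_KG_clique n C}"

definition KG_chromatic_number :: "nat \<Rightarrow> nat" where
  "KG_chromatic_number n = (LEAST k. \<exists>f :: nat set set \<Rightarrow> nat.
      (\<forall>T\<in>Triangs n. f T < k) \<and>
      (\<forall>T\<in>Triangs n. \<forall>T'\<in>Triangs n. T \<noteq> T' \<and> KG_adj T T' \<longrightarrow> f T \<noteq> f T'))"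

end

theory Submission
  imports Defs
begin

(* A vertex v is an ear of a triangulation T if the diagonal joining the two neighbours of v
   lies in T. Every triangulation of an n-gon with n >= 4 has two ears, and triangulations
   without a common diagonal have disjoint sets of ears, so a clique of KG(T_n) has at most
   n/2 members.
   Conversely, the diagonals {a, b} with a + b in {n + 1, n + 2} form a zigzag triangulation.
   Rotating the polygon by one step adds 2 to the endpoint sum of every diagonal modulo n, so
   the rotations of the zigzag by 0, ..., n/2 - 1 steps are pairwise disjoint: a clique of
   size n/2, which moreover needs n/2 colours. *)

lemma cyclically_adjacent_iff:
  assumes "1 \<le> x" "x < y" "y \<le> n"
  shows "[int x - int y = 1] (mod int n) \<or> [int x - int y = -1] (mod int n) \<longleftrightarrow>
    y = x + 1 \<or> y + 1 = x + n"
proof -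
  have small: "int n dvd v \<longleftrightarrow> v = 0" if "\<bar>v\<bar> < int n" for v
    using that dvd_imp_le_int[of v "int n"] by auto
  have "[int x - int y = 1] (mod int n) \<longleftrightarrow> int n dvd (int x - int y - 1 + int n)"
    by (simp add: cong_iff_dvd_diff)
  also have "\<dots> \<longleftrightarrow> y + 1 = x + n"
    using assms by (subst small) auto
  finally have plus: "[int x - int y = 1] (mod int n) \<longleftrightarrow> y + 1 = x + n" .
  have "[int x - int y = -1] (mod int n) \<longleftrightarrow> int n dvd (int x - int y + 1)"
    by (simp add: cong_iff_dvd_diff)
  also have "\<dots> \<longleftrightarrow> y = x + 1"
    using assms by (subst small) auto
  finally show ?thesis using plus by blast
qed

lemma Diag_pair_iff:
  assumes "x < y"
  shows "{x, y} \<in> Diag n \<longleftrightarrow> 1 \<le> x \<and> y \<le> n \<and> x + 2 \<le> y \<and> y + 2 \<le> x + n"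
proof -
  have swap: "[int y - int x = 1] (mod int n) \<longleftrightarrow> [int x - int y = -1] (mod int n)"
    "[int y - int x = -1] (mod int n) \<longleftrightarrow> [int x - int y = 1] (mod int n)"
    using cong_minus_minus_iff[of "int x - int y" "-1" "int n"]
      cong_minus_minus_iff[of "int x - int y" 1 "int n"] by simp_all
  have "{x, y} \<in> Diag n \<longleftrightarrow>
      x \<in> {1..n} \<and> y \<in> {1..n} \<and> x \<noteq> y \<and>
        \<not> [int x - int y = 1] (mod int n) \<and> \<not> [int x - int y = -1] (mod int n) \<or>
      y \<in> {1..n} \<and> x \<in> {1..n} \<and> y \<noteq> x \<and>
        \<not> [int y - int x = 1] (mod int n) \<and> \<not> [int y - int x = -1] (mod int n)"
    unfolding Diag_def mem_Collect_eq doubleton_eq_iff by blast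
  also have "\<dots> \<longleftrightarrow> 1 \<le> x \<and> y \<le> n \<and>
      \<not> ([int x - int y = 1] (mod int n) \<or> [int x - int y = -1] (mod int n))"
    unfolding swap using assms by auto
  finally show ?thesis
    using cyclically_adjacent_iff[of x y n] assms by auto
qed

lemma DiagE:
  assumes "d \<in> Diag n"
  obtains x y where "d = {x, y}" "x < y" "1 \<le> x" "y \<le> n" "x + 2 \<le> y" "y + 2 \<le> x + n"
proof -
  obtain i j where "d = {i, j}" "i \<noteq> j"
    using assms unfolding Diag_def by blast
  then show ?thesis
    using that assms Diag_pair_iff by (metis insert_commute linorder_neqE_nat)
qed

lemma Diag_subset: "d \<in> Diag n \<Longrightarrow> d \<subseteq> {1..n}"
  by (erule DiagE) auto

lemma finite_Diag: "finite (Diag n)"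
  by (rule finite_subset[of _ "Pow {1..n}"]) (use Diag_subset in auto)

lemma crosses_sym: "crosses d e \<longleftrightarrow> crosses e d"
  unfolding crosses_def by blast

lemma crosses_pair_iff:
  assumes "a < b" "c < f"
  shows "crosses {a, b} {c, f} \<longleftrightarrow> a < c \<and> c < b \<and> b < f \<or> c < a \<and> a < f \<and> f < b"
proof
  assume "crosses {a, b} {c, f}"
  then obtain p q r s where "{a, b} = {p, r} \<and> {c, f} = {q, s} \<or> {a, b} = {q, s} \<and> {c, f} = {p, r}"
    "p < q" "q < r" "r < s"
    unfolding crosses_def by blast
  then show "a < c \<and> c < b \<and> b < f \<or> c < a \<and> a < f \<and> f < b"
    using assms by (auto simp: doubleton_eq_iff)
next
  assume "a < c \<and> c < b \<and> b < f \<or> c < a \<and> a < f \<and> f < b"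
  then show "crosses {a, b} {c, f}"
    unfolding crosses_def by blast
qed

lemma is_triangulationD:
  assumes "is_triangulation n T"
  shows "T \<subseteq> Diag n"
    and "d \<in> T \<Longrightarrow> e \<in> T \<Longrightarrow> \<not> crosses d e"
    and "d \<in> Diag n \<Longrightarrow> d \<notin> T \<Longrightarrow> \<exists>e\<in>T. crosses d e"
  using assms unfolding is_triangulation_def by blast+

lemma finite_Triangs: "finite (Triangs n)"
  by (rule finite_subset[of _ "Pow (Diag n)"])
    (auto simp: Triangs_def finite_Diag dest: is_triangulationD(1))

lemma triangulation_nonempty:
  assumes "is_triangulation n T" "4 \<le> n"
  shows "T \<noteq> {}"
proof -
  have "{1, 3} \<in> Diag n"
    using \<open>4 \<le> n\<close> by (simp add: Diag_pair_iff)
  then show ?thesis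
    using is_triangulationD(3)[OF assms(1)] by blast
qed

definition ear_diag :: "nat \<Rightarrow> nat \<Rightarrow> nat set" where
  "ear_diag n v = (if v = 1 then {n, 2} else if v = n then {n - 1, 1} else {v - 1, v + 1})"

definition ears :: "nat \<Rightarrow> nat set set \<Rightarrow> nat set" where
  "ears n T = {v \<in> {1..n}. ear_diag n v \<in> T}"

(* If {a, a + 2} is not in T, the diagonal of T crossing it runs from a + 1 to some point of
   (a + 2, b], and it cuts off a shorter uncrossed interval. *)
lemma ear_between:
  assumes T: "is_triangulation n T" and "4 \<le> n"
    and "1 \<le> a" "a + 2 \<le> b" "b \<le> n" "\<forall>e\<in>T. \<not> crosses {a, b} e"
  shows "\<exists>v\<in>ears n T. a < v \<and> v < b"
  using assms(3-)
proof (induction "b - a" arbitrary: a b rule: less_induct)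
  case less
  show ?case
  proof (cases "{a, a + 2} \<in> T")
    case True
    then show ?thesis
      using less.prems by (intro bexI[of _ "a + 1"]) (auto simp: ears_def ear_diag_def)
  next
    case False
    have "{a, a + 2} \<in> Diag n"
      using less.prems \<open>4 \<le> n\<close> by (simp add: Diag_pair_iff)
    then obtain e where e: "e \<in> T" "crosses {a, a + 2} e"
      using False is_triangulationD(3)[OF T] by blast
    then obtain c f where cf: "e = {c, f}" "c < f" "1 \<le> c" "f \<le> n"
      using is_triangulationD(1)[OF T] by (blast elim: DiagE)
    have "\<not> crosses {a, b} {c, f}"
      using less.prems e cf by blast
    then have c: "c = a + 1" and f: "a + 2 < f" "f \<le> b"
      using e(2) less.prems cf crosses_pair_iff[of a "a + 2" c f] crosses_pair_iff[of a b c f]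
      by auto
    have "\<forall>e'\<in>T. \<not> crosses {c, f} e'"
      using is_triangulationD(2)[OF T e(1)] cf by blast
    then have "\<exists>v\<in>ears n T. c < v \<and> v < f"
      using less.prems c f cf by (intro less.hyps) auto
    then obtain v where "v \<in> ears n T" "c < v" "v < f"
      by blast
    then show ?thesis
      using c f by (intro bexI[of _ v]) auto
  qed
qed

lemma last_chord_at_1_uncrossed:
  assumes T: "is_triangulation n T" and m: "{1, m} \<in> T" "3 \<le> m" "m < n"
    and m_max: "\<And>b. {1, b} \<in> T \<Longrightarrow> b \<le> m" and e: "e \<in> T"
  shows "\<not> crosses {m, n} e"
proof
  assume cross: "crosses {m, n} e"
  obtain c f where cf: "e = {c, f}" "c < f" "1 \<le> c" "f \<le> n"
    using e is_triangulationD(1)[OF T] by (blast elim: DiagE)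
  then have "c < m" "m < f"
    using cross crosses_pair_iff[of m n c f] \<open>m < n\<close> by auto
  show False
  proof (cases "c = 1")
    case True
    then show False
      using m_max[of f] \<open>m < f\<close> e cf by auto
  next
    case False
    then have "crosses {1, m} e"
      using crosses_pair_iff[of 1 m c f] cf \<open>c < m\<close> \<open>m < f\<close> \<open>3 \<le> m\<close> by auto
    then show False
      using is_triangulationD(2)[OF T m(1) e] by blast
  qed
qed

lemma two_ears_if_chord_at_1:
  assumes T: "is_triangulation n T" and n: "4 \<le> n"
    and m: "{1, m} \<in> T" and m_max: "\<And>b. {1, b} \<in> T \<Longrightarrow> b \<le> m"
  obtains v w where "v \<in> ears n T" "w \<in> ears n T" "v < w"
proof -
  have "{1, m} \<in> Diag n"
    using m is_triangulationD(1)[OF T] by blast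
  then obtain x y where "{1, m} = {x, y}" "x < y" "1 \<le> x" "x + 2 \<le> y" "y + 2 \<le> x + n"
    by (rule DiagE)
  then have "3 \<le> m" "m + 1 \<le> n"
    by (auto simp: doubleton_eq_iff)
  moreover have "\<forall>e\<in>T. \<not> crosses {1, m} e"
    using is_triangulationD(2)[OF T m] by blast
  ultimately obtain v where v: "v \<in> ears n T" "v < m"
    using ear_between[OF T n, of 1 m] by auto
  show thesis
  proof (cases "m + 1 = n")
    case True
    then have "n \<in> ears n T"
      using m n by (auto simp: ears_def ear_diag_def insert_commute)
    then show thesis
      using that[of v n] v True by simp
  next
    case False
    have "\<forall>e\<in>T. \<not> crosses {m, n} e"
      using last_chord_at_1_uncrossed[OF T m \<open>3 \<le> m\<close> _ m_max] \<open>m + 1 \<le> n\<close> by simp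
    then obtain w where "w \<in> ears n T" "m < w"
      using ear_between[OF T n, of m n] \<open>3 \<le> m\<close> \<open>m + 1 \<le> n\<close> False by auto
    then show thesis
      using that[of v w] v by simp
  qed
qed

lemma two_ears_if_no_chord_at_1:
  assumes T: "is_triangulation n T" and n: "4 \<le> n" and no_chord: "\<And>b. {1, b} \<notin> T"
  obtains v w where "v \<in> ears n T" "w \<in> ears n T" "v < w"
proof -
  have "{2, n} \<in> T"
  proof (rule ccontr)
    assume "{2, n} \<notin> T"
    moreover have "{2, n} \<in> Diag n"
      using n by (simp add: Diag_pair_iff)
    ultimately obtain e where "e \<in> T" "crosses {2, n} e"
      using is_triangulationD(3)[OF T] by blast
    moreover obtain c f where "e = {c, f}" "c < f" "1 \<le> c" "f \<le> n"
      using \<open>e \<in> T\<close> is_triangulationD(1)[OF T] by (blast elim: DiagE)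
    ultimately show False
      using no_chord crosses_pair_iff[of 2 n c f] n by (cases "c = 1") auto
  qed
  then have "1 \<in> ears n T"
    using n by (auto simp: ears_def ear_diag_def insert_commute)
  moreover obtain w where "w \<in> ears n T" "2 < w"
    using ear_between[OF T n, of 2 n] is_triangulationD(2)[OF T \<open>{2, n} \<in> T\<close>] n by auto
  ultimately show thesis
    using that[of 1 w] by simp
qed

lemma card_ears_ge_2:
  assumes T: "is_triangulation n T" and n: "4 \<le> n"
  shows "2 \<le> card (ears n T)"
proof -
  obtain v w where vw: "v \<in> ears n T" "w \<in> ears n T" "v < w"
  proof (cases "\<exists>b. {1, b} \<in> T")
    case True
    define B where "B = {b. {1, b} \<in> T}"
    have "B \<subseteq> {..n}"
    proof
      fix b
      assume "b \<in> B"
      then have "{1, b} \<subseteq> {1..n}"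
        using is_triangulationD(1)[OF T] Diag_subset unfolding B_def by blast
      then show "b \<in> {..n}"
        by auto
    qed
    then have "finite B"
      by (rule finite_subset) simp
    then have m: "{1, Max B} \<in> T" and m_max: "\<And>b. {1, b} \<in> T \<Longrightarrow> b \<le> Max B"
      using True Max_in[of B] unfolding B_def by auto
    show thesis
      by (rule two_ears_if_chord_at_1[OF T n m m_max that])
  next
    case False
    then show thesis
      by (intro two_ears_if_no_chord_at_1[OF T n _ that]) blast
  qed
  then have "card {v, w} \<le> card (ears n T)"
    by (intro card_mono) (auto simp: ears_def)
  then show ?thesis
    using vw by simp
qed

lemma card_KG_clique_le:
  assumes C: "is_KG_clique n C" and n: "4 \<le> n"
  shows "card C \<le> n div 2"
proof -
  have tri: "is_triangulation n T" if "T \<in> C" for T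
    using C that unfolding is_KG_clique_def Triangs_def by auto
  have "finite C"
    using C finite_Triangs[of n] unfolding is_KG_clique_def by (blast intro: finite_subset)
  have disjoint: "ears n T \<inter> ears n T' = {}" if "T \<in> C" "T' \<in> C" "T \<noteq> T'" for T T'
    using C that unfolding is_KG_clique_def KG_adj_def ears_def by blast
  have "2 * card C = (\<Sum>T\<in>C. 2)"
    by simp
  also have "\<dots> \<le> (\<Sum>T\<in>C. card (ears n T))"
    using card_ears_ge_2[OF tri n] by (rule sum_mono)
  also have "\<dots> = card (\<Union>T\<in>C. ears n T)"
    using \<open>finite C\<close> disjoint by (intro card_UN_disjoint[symmetric]) (auto simp: ears_def)
  also have "\<dots> \<le> card {1..n}"
    by (intro card_mono) (auto simp: ears_def)
  finally show ?thesis
    by simp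
qed

definition rot :: "nat \<Rightarrow> nat \<Rightarrow> nat" where
  "rot n x = x mod n + 1"

lemma rot_eq: "1 \<le> x \<Longrightarrow> x \<le> n \<Longrightarrow> rot n x = (if x = n then 1 else x + 1)"
  by (simp add: rot_def)

lemma inj_on_rot: "inj_on (rot n) {1..n}"
  by (auto simp: inj_on_def rot_eq split: if_splits)

lemma rot_Diag:
  assumes "d \<in> Diag n"
  shows "rot n ` d \<in> Diag n"
proof -
  obtain x y where xy: "d = {x, y}" "x < y" "1 \<le> x" "y \<le> n" "x + 2 \<le> y" "y + 2 \<le> x + n"
    using assms by (rule DiagE)
  show ?thesis
  proof (cases "y = n")
    case True
    then have "rot n ` d = {1, x + 1}"
      using xy by (auto simp: rot_eq)
    then show ?thesis
      using xy True by (simp add: Diag_pair_iff)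
  next
    case False
    then have "rot n ` d = {x + 1, y + 1}"
      using xy by (auto simp: rot_eq)
    then show ?thesis
      using xy False by (simp add: Diag_pair_iff)
  qed
qed

lemma crosses_rot:
  assumes "d \<subseteq> {1..n}" "e \<subseteq> {1..n}" "crosses d e"
  shows "crosses (rot n ` d) (rot n ` e)"
proof -
  have quadruple: "crosses {rot n a, rot n b} {rot n c, rot n f}"
    if "1 \<le> a" "a < c" "c < b" "b < f" "f \<le> n" for a b c f
  proof (cases "f = n")
    case True
    then have "{rot n a, rot n b} = {a + 1, b + 1}" "{rot n c, rot n f} = {1, c + 1}"
      using that by (auto simp: rot_eq)
    then show ?thesis
      using that crosses_pair_iff[of "a + 1" "b + 1" 1 "c + 1"] by auto
  next
    case False
    then have "{rot n a, rot n b} = {a + 1, b + 1}" "{rot n c, rot n f} = {c + 1, f + 1}"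
      using that by (auto simp: rot_eq)
    then show ?thesis
      using that crosses_pair_iff[of "a + 1" "b + 1" "c + 1" "f + 1"] by auto
  qed
  obtain a b c f where "d = {a, b} \<and> e = {c, f} \<or> d = {c, f} \<and> e = {a, b}"
    "a < c" "c < b" "b < f"
    using \<open>crosses d e\<close> unfolding crosses_def by blast
  then show ?thesis
    using quadruple[of a c b f] assms crosses_sym by auto
qed

definition polygon_symmetry :: "nat \<Rightarrow> (nat \<Rightarrow> nat) \<Rightarrow> bool" where
  "polygon_symmetry n g \<longleftrightarrow> inj_on g {1..n} \<and> (\<forall>d\<in>Diag n. g ` d \<in> Diag n) \<and>
     (\<forall>d\<in>Diag n. \<forall>e\<in>Diag n. crosses d e \<longrightarrow> crosses (g ` d) (g ` e))"

lemma polygon_symmetry_rot: "polygon_symmetry n (rot n)"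
  using inj_on_rot rot_Diag crosses_rot[OF Diag_subset Diag_subset]
  unfolding polygon_symmetry_def by blast

lemma inj_on_image_Diag:
  assumes "polygon_symmetry n g"
  shows "inj_on ((`) g) (Diag n)"
proof (rule inj_onI)
  fix d e
  assume "d \<in> Diag n" "e \<in> Diag n" "g ` d = g ` e"
  then show "d = e"
    using inj_on_image_eq_iff[of g "{1..n}" d e] Diag_subset assms
    unfolding polygon_symmetry_def by blast
qed

lemma image_Diag_eq:
  assumes "polygon_symmetry n g"
  shows "(`) g ` Diag n = Diag n"
  using assms finite_Diag inj_on_image_Diag[OF assms]
  by (intro endo_inj_surj) (auto simp: polygon_symmetry_def)

(* g induces an injection of the finite set of crossing pairs into itself, hence a bijection:
   crossings are reflected as well as preserved. *)
lemma crosses_image_iff: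
  assumes g: "polygon_symmetry n g" and "d \<in> Diag n" "e \<in> Diag n"
  shows "crosses (g ` d) (g ` e) \<longleftrightarrow> crosses d e"
proof
  assume cross: "crosses (g ` d) (g ` e)"
  define X where "X = {(d, e) \<in> Diag n \<times> Diag n. crosses d e}"
  define G where "G = map_prod ((`) g) ((`) g)"
  have inj: "inj_on G (Diag n \<times> Diag n)"
    unfolding G_def using inj_on_image_Diag[OF g] inj_on_image_Diag[OF g] by (rule map_prod_inj_on)
  have "G ` X = X"
  proof (rule endo_inj_surj)
    show "finite X"
      by (rule finite_subset[of _ "Diag n \<times> Diag n"]) (auto simp: X_def finite_Diag)
    show "G ` X \<subseteq> X"
      using g unfolding X_def G_def polygon_symmetry_def by auto
    show "inj_on G X"
      using inj by (rule inj_on_subset) (auto simp: X_def)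
  qed
  moreover have "G (d, e) \<in> X"
    using g cross assms unfolding X_def G_def polygon_symmetry_def by auto
  ultimately obtain p where "p \<in> X" "G p = G (d, e)"
    by (metis imageE)
  then have "p = (d, e)"
    using inj assms unfolding X_def inj_on_def by blast
  then show "crosses d e"
    using \<open>p \<in> X\<close> by (simp add: X_def)
next
  assume "crosses d e"
  then show "crosses (g ` d) (g ` e)"
    using g assms unfolding polygon_symmetry_def by blast
qed

lemma is_triangulation_image:
  assumes g: "polygon_symmetry n g" and T: "is_triangulation n T"
  shows "is_triangulation n ((`) g ` T)"
  unfolding is_triangulation_def
proof (intro conjI ballI)
  show "(`) g ` T \<subseteq> Diag n"
    using is_triangulationD(1)[OF T] image_Diag_eq[OF g] by blast
next
  fix d' e'
  assume "d' \<in> (`) g ` T" "e' \<in> (`) g ` T"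
  then obtain d e where "d \<in> T" "e \<in> T" "d' = g ` d" "e' = g ` e"
    by blast
  moreover have "d \<in> Diag n" "e \<in> Diag n"
    using calculation(1,2) is_triangulationD(1)[OF T] by blast+
  ultimately show "\<not> crosses d' e'"
    using crosses_image_iff[OF g] is_triangulationD(2)[OF T] by simp
next
  fix d'
  assume d': "d' \<in> Diag n - (`) g ` T"
  then obtain d where d: "d \<in> Diag n" "d' = g ` d"
    using image_Diag_eq[OF g] by (metis DiffD1 imageE)
  then have "d \<notin> T"
    using d' by blast
  then obtain e where e: "e \<in> T" "crosses d e"
    using is_triangulationD(3)[OF T d(1)] by blast
  then have "crosses d' (g ` e)"
    using crosses_image_iff[OF g d(1)] is_triangulationD(1)[OF T] d(2) by blast
  then show "\<exists>e'\<in>(`) g ` T. crosses d' e'"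
    using e(1) by blast
qed

definition zigzag :: "nat \<Rightarrow> nat set set" where
  "zigzag n = {d \<in> Diag n. \<Sum>d = n + 1 \<or> \<Sum>d = n + 2}"

lemma zigzag_pair_iff:
  assumes "a < b"
  shows "{a, b} \<in> zigzag n \<longleftrightarrow> {a, b} \<in> Diag n \<and> (a + b = n + 1 \<or> a + b = n + 2)"
  using assms by (simp add: zigzag_def)

lemma zigzagE:
  assumes "d \<in> zigzag n"
  obtains a b where "d = {a, b}" "a < b" "{a, b} \<in> Diag n" "a + b = n + 1 \<or> a + b = n + 2"
  using assms zigzag_pair_iff by (metis (lifting) DiagE mem_Collect_eq zigzag_def)

lemma crossing_zigzag_diagonal:
  assumes ab: "a < b" "{a, b} \<in> Diag n" and sum: "a + b \<noteq> n + 1" "a + b \<noteq> n + 2"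
  obtains c f where "c < f" "{c, f} \<in> zigzag n" "crosses {a, b} {c, f}"
proof (cases "a + b \<le> n")
  case True
  define f where "f = (if a + b = n then n + 1 - a else n - a)"
  show ?thesis
  proof (rule that[of "a + 1" f])
    show "a + 1 < f" "{a + 1, f} \<in> zigzag n" "crosses {a, b} {a + 1, f}"
      using ab True by (auto simp: f_def zigzag_pair_iff Diag_pair_iff crosses_pair_iff)
  qed
next
  case False
  show ?thesis
  proof (rule that[of "n + 2 - b" "b - 1"])
    show "n + 2 - b < b - 1" "{n + 2 - b, b - 1} \<in> zigzag n" "crosses {a, b} {n + 2 - b, b - 1}"
      using ab sum False by (auto simp: zigzag_pair_iff Diag_pair_iff crosses_pair_iff)
  qed
qed

lemma is_triangulation_zigzag: "is_triangulation n (zigzag n)"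
  unfolding is_triangulation_def
proof (intro conjI ballI)
  show "zigzag n \<subseteq> Diag n"
    by (auto simp: zigzag_def)
next
  fix d e
  assume "d \<in> zigzag n" "e \<in> zigzag n"
  then obtain a b c f where "d = {a, b}" "a < b" "a + b = n + 1 \<or> a + b = n + 2"
    "e = {c, f}" "c < f" "c + f = n + 1 \<or> c + f = n + 2"
    by (metis zigzagE)
  then show "\<not> crosses d e"
    using crosses_pair_iff[of a b c f] by auto
next
  fix d
  assume d: "d \<in> Diag n - zigzag n"
  then obtain a b where "d = {a, b}" "a < b"
    by (blast elim: DiagE)
  moreover have "a + b \<noteq> n + 1" "a + b \<noteq> n + 2"
    using d calculation zigzag_pair_iff[of a b n] by auto
  ultimately show "\<exists>e\<in>zigzag n. crosses d e"
    using d crossing_zigzag_diagonal[of a b n] by blast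
qed

definition rotate :: "nat \<Rightarrow> nat set set \<Rightarrow> nat set set" where
  "rotate n T = (`) (rot n) ` T"

lemma is_triangulation_rotated_zigzag: "is_triangulation n ((rotate n ^^ i) (zigzag n))"
  by (induction i)
    (simp_all add: is_triangulation_zigzag rotate_def is_triangulation_image polygon_symmetry_rot)

lemma sum_rot_image_cong:
  assumes "d \<in> Diag n"
  shows "[\<Sum>(rot n ` d) = \<Sum>d + 2] (mod n)"
proof -
  obtain x y where xy: "d = {x, y}" "x < y" "1 \<le> x" "y \<le> n"
    using assms by (rule DiagE)
  then have "rot n x \<noteq> rot n y"
    by (intro inj_on_contraD[OF inj_on_rot]) auto
  then have "\<Sum>(rot n ` d) = x mod n + y mod n + 2"
    using xy(1) by (simp add: rot_def)
  moreover have "[x mod n + y mod n + 2 = x + y + 2] (mod n)"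
    by (intro cong_add cong_mod_leftI cong_refl)
  ultimately show ?thesis
    using xy by simp
qed

lemma rotated_zigzag_sum_cong:
  assumes "d \<in> (rotate n ^^ i) (zigzag n)"
  shows "[\<Sum>d = 2 * i + 1] (mod n) \<or> [\<Sum>d = 2 * i + 2] (mod n)"
  using assms
proof (induction i arbitrary: d)
  case 0
  then have "\<Sum>d = n + 1 \<or> \<Sum>d = n + 2"
    by (simp add: zigzag_def)
  moreover have "[n + 1 = 1] (mod n)" "[n + 2 = 2] (mod n)"
    by (simp_all only: cong_def mod_add_self1)
  ultimately show ?case
    unfolding mult_zero_right add_0 by metis
next
  case (Suc i)
  then obtain d0 where d0: "d0 \<in> (rotate n ^^ i) (zigzag n)" "d = rot n ` d0"
    unfolding funpow.simps comp_def rotate_def by blast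
  have "2 * Suc i + 1 = (2 * i + 1) + 2" "2 * Suc i + 2 = (2 * i + 2) + 2"
    by simp_all
  then have "[\<Sum>d0 + 2 = 2 * Suc i + 1] (mod n) \<or> [\<Sum>d0 + 2 = 2 * Suc i + 2] (mod n)"
    using Suc.IH[OF d0(1)] by (simp only: cong_add_rcancel_nat)
  moreover have "[\<Sum>d = \<Sum>d0 + 2] (mod n)"
    using d0 sum_rot_image_cong is_triangulationD(1)[OF is_triangulation_rotated_zigzag]
    by blast
  ultimately show ?case
    using cong_trans by blast
qed

lemma cong_atLeastAtMost_unique:
  fixes x y n :: nat
  assumes "[x = y] (mod n)" "x \<in> {1..n}" "y \<in> {1..n}"
  shows "x = y"
  using assms by (cases "x = n"; cases "y = n") (auto simp: cong_def)

lemma rotated_zigzags_disjoint: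
  assumes "i < j" "2 * j + 2 \<le> n"
  shows "(rotate n ^^ i) (zigzag n) \<inter> (rotate n ^^ j) (zigzag n) = {}"
proof (rule ccontr)
  assume "(rotate n ^^ i) (zigzag n) \<inter> (rotate n ^^ j) (zigzag n) \<noteq> {}"
  then obtain d where "d \<in> (rotate n ^^ i) (zigzag n)" "d \<in> (rotate n ^^ j) (zigzag n)"
    by blast
  then obtain r s where "r \<in> {2 * i + 1, 2 * i + 2}" "s \<in> {2 * j + 1, 2 * j + 2}"
    "[\<Sum>d = r] (mod n)" "[\<Sum>d = s] (mod n)"
    using rotated_zigzag_sum_cong by (metis insertCI)
  then have "[r = s] (mod n)"
    by (metis cong_sym cong_trans)
  moreover have "1 \<le> r" "r \<le> 2 * i + 2" "2 * j + 1 \<le> s" "s \<le> n"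
    using \<open>r \<in> _\<close> \<open>s \<in> _\<close> assms by auto
  ultimately show False
    using cong_atLeastAtMost_unique[of r s n] \<open>i < j\<close> by simp
qed

lemma exists_KG_clique:
  assumes n: "4 \<le> n"
  obtains C where "is_KG_clique n C" "card C = n div 2"
proof -
  define Z where "Z i = (rotate n ^^ i) (zigzag n)" for i
  have disjoint: "Z i \<inter> Z j = {}" if "i < n div 2" "j < n div 2" "i \<noteq> j" for i j
    using that rotated_zigzags_disjoint[of i j n] rotated_zigzags_disjoint[of j i n]
    unfolding Z_def by (cases "i < j") (auto simp: Int_commute)
  have tri: "is_triangulation n (Z i)" for i
    unfolding Z_def by (rule is_triangulation_rotated_zigzag)
  have "is_KG_clique n (Z ` {..<n div 2})"
    using tri disjoint unfolding is_KG_clique_def KG_adj_def Triangs_def by auto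
  moreover have "inj_on Z {..<n div 2}"
    using disjoint triangulation_nonempty[OF tri n] by (metis Int_absorb inj_onI lessThan_iff)
  then have "card (Z ` {..<n div 2}) = n div 2"
    by (simp add: card_image)
  ultimately show ?thesis
    using that by blast
qed

lemma card_KG_clique_le_chromatic_number:
  assumes C: "is_KG_clique n C"
  shows "card C \<le> KG_chromatic_number n"
proof -
  define colouring where "colouring k f \<longleftrightarrow> (\<forall>T\<in>Triangs n. f T < k) \<and>
      (\<forall>T\<in>Triangs n. \<forall>T'\<in>Triangs n. T \<noteq> T' \<and> KG_adj T T' \<longrightarrow> f T \<noteq> f T')"
    for k and f :: "nat set set \<Rightarrow> nat"
  have bound: "card C \<le> k" if "colouring k f" for k f
  proof -
    have "inj_on f C"
    proof (rule inj_onI)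
      fix T T'
      assume "T \<in> C" "T' \<in> C" "f T = f T'"
      then show "T = T'"
        using C that unfolding colouring_def is_KG_clique_def by (meson subsetD)
    qed
    moreover have "f ` C \<subseteq> {..<k}"
      using C that unfolding colouring_def is_KG_clique_def by auto
    ultimately show "card C \<le> k"
      using card_inj_on_le[of f C "{..<k}"] by simp
  qed
  obtain f :: "nat set set \<Rightarrow> nat" and k where "f ` Triangs n = {i. i < k}" "inj_on f (Triangs n)"
    using finite_imp_inj_to_nat_seg[OF finite_Triangs] by blast
  then have "colouring k f"
    by (auto simp: colouring_def inj_on_def)
  then have "\<exists>k f. colouring k f"
    by blast
  then have "card C \<le> (LEAST k. \<exists>f. colouring k f)"
    by (rule LeastI2_ex) (use bound in blast)
  then show ?thesis
    by (simp add: KG_chromatic_number_def colouring_def)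
qed

theorem mainTheorem15:
  fixes n :: nat
  assumes "n \<ge> 4"
  shows "KG_clique_number n = n div 2 \<and> KG_chromatic_number n \<ge> n div 2"
proof
  obtain C where C: "is_KG_clique n C" "card C = n div 2"
    using exists_KG_clique[OF assms] .
  have "Max {card C | C. is_KG_clique n C} = n div 2"
  proof (rule Max_eqI)
    show "finite {card C | C. is_KG_clique n C}"
      by (rule finite_subset[of _ "{..n div 2}"]) (auto dest: card_KG_clique_le[OF _ assms])
    show "n div 2 \<in> {card C | C. is_KG_clique n C}"
      using C(1) C(2)[symmetric] by blast
  qed (use card_KG_clique_le[OF _ assms] in auto)
  then show "KG_clique_number n = n div 2"
    unfolding KG_clique_number_def .
  show "KG_chromatic_number n \<ge> n div 2"
    using card_KG_clique_le_chromatic_number[OF C(1)] C(2) by simp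
qed

end
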